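(* Let $0<t_0\le1/2$, $t\in[t_0,1]$. There exist nonnegative integers $c^{k,j}_{\ell,p,q}$ ($k,j,\ell,p,q\in\mathbb Z_+$), with $c^{0,0}_{0,0,0}=1$, determined by the recursion $$c^{k+1,j}_{\ell,p,q}=c^{k,j-2}_{\ell,p-1,q}+c^{k,j}_{\ell,p,q-1}+2c^{k,j-1}_{\ell-1,p,q}$$ under the convention that $c^{k,j}_{\ell,p,q}=0$ if $j>2k$ or any entry of $(j,\ell,p,q)$ is negative, such that for every $k\in\mathbb Z_+$ and all sufficiently smooth functions $g,h$ on $\mathbb T^3\times\mathbb R^3$, $$M^k(gh)=\sum_{j=0}^{2k}A_{j,2k-j}(g,h),\qquad A_{j,2k-j}(g,h)=\sum_{\ell+2p=j,\ \ell+2q=2k-j}c^{k,j}_{\ell,p,q}\,(\Lambda^\ell M^pg)\cdot(\Lambda^\ell M^qh),$$ the inner sum being over all nonnegative integers $\ell,p,q$ with $\ell+2p=j$ and $\ell+2q=2k-j$. Moreover $$\sum_{\ell+2p=j,\ \ell+2q=2k-j}c^{k,j}_{\ell,p,q}=\binom{2k}{j}.$$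
   Context: $M=-(t-t_0)\partial_{v_1}^2-(t-t_0)^2\partial_{x_1}\partial_{v_1}-\frac{(t-t_0)^3}{3}\partial_{x_1}^2$ acting on functions of $(x,v)\in\mathbb T^3\times\mathbb R^3$. With $\sqrt{-1}$ the imaginary unit, $\Lambda_1=\frac{1}{2\sqrt{-1}}\big((t-t_0)^{1/2}\partial_{v_1}+(t-t_0)^{3/2}\partial_{x_1}\big)$ and $\Lambda_2=\frac{\sqrt3}{6\sqrt{-1}}\big(3(t-t_0)^{1/2}\partial_{v_1}+(t-t_0)^{3/2}\partial_{x_1}\big)$, so that $M=\Lambda_1^2+\Lambda_2^2$. For $\ell\in\mathbb Z_+$, $\Lambda^\ell g\cdot\Lambda^\ell h:=\sum_{j_1=1}^2\cdots\sum_{j_\ell=1}^2(\Lambda_{j_1}\cdots\Lambda_{j_\ell}g)(\Lambda_{j_1}\cdots\Lambda_{j_\ell}h)$ (equal to $gh$ when $\ell=0$). *)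

theory Defs
  imports "HOL-Analysis.Analysis"
begin

text \<open>Phase space point (x, v) with x in R^3 (representing T^3 via 1-periodicity) and v in R^3.\<close>
type_synonym pt = "(real^3) \<times> (real^3)"
type_synonym fn = "pt \<Rightarrow> complex"

text \<open>C-infinity: f lies in a family of everywhere (Frechet-)differentiable functions
  closed under taking directional derivatives in every direction.\<close>
definition smooth_fun :: "fn \<Rightarrow> bool" where
  "smooth_fun f \<longleftrightarrow> (\<exists>F. f \<in> F \<and> (\<forall>g\<in>F. \<forall>p. g differentiable (at p))
      \<and> (\<forall>g\<in>F. \<forall>u. (\<lambda>p. frechet_derivative g (at p) u) \<in> F))"

definition periodic_x :: "fn \<Rightarrow> bool" where
  "periodic_x f \<longleftrightarrow> (\<forall>x v i. f (x + axis i 1, v) = f (x, v))"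

definition dx1 :: "fn \<Rightarrow> fn" where
  "dx1 f = (\<lambda>p. frechet_derivative f (at p) (axis 1 1, 0))"

definition dv1 :: "fn \<Rightarrow> fn" where
  "dv1 f = (\<lambda>p. frechet_derivative f (at p) (0, axis 1 1))"

text \<open>M with tau = t - t0.\<close>
definition Mop :: "real \<Rightarrow> fn \<Rightarrow> fn" where
  "Mop \<tau> f = (\<lambda>p. - (complex_of_real \<tau> * dv1 (dv1 f) p)
                   - complex_of_real (\<tau>^2) * dx1 (dv1 f) p
                   - complex_of_real (\<tau>^3 / 3) * dx1 (dx1 f) p)"

definition Lam :: "real \<Rightarrow> nat \<Rightarrow> fn \<Rightarrow> fn" where
  "Lam \<tau> j f = (if j = 1 then
      (\<lambda>p. (1 / (2 * \<i>)) * (complex_of_real (\<tau> powr (1/2)) * dv1 f p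
                              + complex_of_real (\<tau> powr (3/2)) * dx1 f p))
    else
      (\<lambda>p. (complex_of_real (sqrt 3) / (6 * \<i>)) *
             (3 * complex_of_real (\<tau> powr (1/2)) * dv1 f p
              + complex_of_real (\<tau> powr (3/2)) * dx1 f p)))"

definition lam_word :: "real \<Rightarrow> nat list \<Rightarrow> fn \<Rightarrow> fn" where
  "lam_word \<tau> w f = foldr (Lam \<tau>) w f"

definition lam_dot :: "real \<Rightarrow> nat \<Rightarrow> fn \<Rightarrow> fn \<Rightarrow> fn" where
  "lam_dot \<tau> l g h = (\<lambda>p. \<Sum>w\<in>{w. length w = l \<and> set w \<subseteq> {1,2}}.
       lam_word \<tau> w g p * lam_word \<tau> w h p)"

definition idx :: "nat \<Rightarrow> nat \<Rightarrow> (nat \<times> nat \<times> nat) set" where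
  "idx k j = {(l, p, q). l + 2 * p = j \<and> l + 2 * q = 2 * k - j}"

end

theory Submission
  imports Defs "HOL-Library.Groups_Big_Fun"
begin

text \<open>
  With \<open>\<tau> = t - t0 \<ge> 0\<close> the operator M equals \<open>\<Lambda>\<^sub>1\<^sup>2 + \<Lambda>\<^sub>2\<^sup>2\<close>, where each \<open>\<Lambda>\<^sub>j\<close> is a
  constant-coefficient combination of \<open>\<partial>\<^sub>v\<^sub>1\<close> and \<open>\<partial>\<^sub>x\<^sub>1\<close>. Such operators are derivations, and
  they commute with each other by the symmetry of mixed second derivatives. Hence M commutes
  with every \<open>\<Lambda>\<^sub>j\<close> and \<open>M(fg) = (Mf) g + f (Mg) + 2 \<Sigma>\<^sub>j \<Lambda>\<^sub>j f \<Lambda>\<^sub>j g\<close>; summed over words this reads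
  \<open>M(\<Lambda>\<^sup>l M\<^sup>p g \<cdot> \<Lambda>\<^sup>l M\<^sup>q h)\<close> = term \<open>(l, p+1, q)\<close> + term \<open>(l, p, q+1)\<close> + 2 term \<open>(l+1, p, q)\<close>.
  Iterating k times from \<open>(0, 0, 0)\<close> produces exactly the coefficients of the recursion, with
  \<open>j = l + 2p\<close> the number of derivatives falling on g. Running the same iteration on the
  indicator of \<open>l + 2p = j\<close> is Pascal's rule applied twice, which yields \<open>2k choose j\<close>.
\<close>

section \<open>Symmetry of mixed second derivatives\<close>

definition second_difference ::
    "('a::real_normed_vector \<Rightarrow> 'b::real_normed_vector) \<Rightarrow> 'a \<Rightarrow> 'a \<Rightarrow> 'a \<Rightarrow> real \<Rightarrow> 'b" where
  "second_difference f p u v h = f (p + h *\<^sub>R u + h *\<^sub>R v) - f (p + h *\<^sub>R u) - f (p + h *\<^sub>R v) + f p"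

lemma second_difference_commute: "second_difference f p u v h = second_difference f p v u h"
  unfolding second_difference_def by (simp add: algebra_simps)

lemma second_difference_mvt:
  fixes f :: "'a::real_normed_vector \<Rightarrow> 'b::real_inner"
  assumes df: "\<And>x. f differentiable (at x)" and h: "0 < h"
  shows "\<exists>s\<in>{0<..<h}. norm (second_difference f p u v h - h\<^sup>2 *\<^sub>R B)
    \<le> h * norm (frechet_derivative f (at (p + s *\<^sub>R u + h *\<^sub>R v)) u
                 - frechet_derivative f (at (p + s *\<^sub>R u)) u - h *\<^sub>R B)"
proof -
  define D where "D x = frechet_derivative f (at x)" for x
  have D: "(f has_derivative D x) (at x)" for x
    using df frechet_derivative_works unfolding D_def by blast
  have D_scale: "D x (t *\<^sub>R u) = t *\<^sub>R D x u" for x t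
    using D has_derivative_linear linear_scale by blast
  define G where "G s = f (p + s *\<^sub>R u + h *\<^sub>R v) - f (p + s *\<^sub>R u) - (s * h) *\<^sub>R B" for s
  define G' where "G' s t = D (p + s *\<^sub>R u + h *\<^sub>R v) (t *\<^sub>R u) - D (p + s *\<^sub>R u) (t *\<^sub>R u)
    - (t * h) *\<^sub>R B" for s t
  have G: "(G has_derivative G' s) (at s)" for s
  proof -
    have "((\<lambda>s. f (p + s *\<^sub>R u + h *\<^sub>R v)) has_derivative (\<lambda>t. D (p + s *\<^sub>R u + h *\<^sub>R v) (t *\<^sub>R u))) (at s)"
      "((\<lambda>s. f (p + s *\<^sub>R u)) has_derivative (\<lambda>t. D (p + s *\<^sub>R u) (t *\<^sub>R u))) (at s)"
      by (rule has_derivative_compose[of _ "\<lambda>t. t *\<^sub>R u", OF _ D, unfolded o_def];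
          auto intro!: derivative_eq_intros)+
    then show ?thesis
      unfolding G_def G'_def by (auto intro!: derivative_eq_intros)
  qed
  have "continuous_on {0..h} G"
    using G by (meson continuous_at_imp_continuous_on has_derivative_continuous)
  then obtain s where s: "s \<in> {0<..<h}" and "norm (G h - G 0) \<le> norm (G' s (h - 0))"
    using mvt_general[OF h, of G G'] G by blast
  moreover have "G h - G 0 = second_difference f p u v h - h\<^sup>2 *\<^sub>R B"
    unfolding G_def second_difference_def by (simp add: power2_eq_square algebra_simps)
  moreover have "G' s h = h *\<^sub>R (D (p + s *\<^sub>R u + h *\<^sub>R v) u - D (p + s *\<^sub>R u) u - h *\<^sub>R B)"
    unfolding G'_def D_scale by (simp add: algebra_simps)
  ultimately show ?thesis
    using h unfolding D_def by auto
qed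

lemma has_derivative_increment_estimate:
  assumes UL: "(U has_derivative L) (at p)" and e: "0 < e"
  obtains d where "0 < d" and "\<And>y z r. norm (y - p) \<le> r \<Longrightarrow> norm (z - p) \<le> r \<Longrightarrow> r < d \<Longrightarrow>
    norm (U y - U z - L (y - z)) \<le> e * r"
proof -
  obtain d where "0 < d" and
    small: "\<And>y. norm (y - p) < d \<Longrightarrow> norm (U y - U p - L (y - p)) \<le> e / 2 * norm (y - p)"
    using UL e unfolding has_derivative_at_alt by (meson half_gt_zero)
  have "norm (U y - U z - L (y - z)) \<le> e * r"
    if "norm (y - p) \<le> r" "norm (z - p) \<le> r" "r < d" for y z r
  proof -
    have bound: "norm (U x - U p - L (x - p)) \<le> e / 2 * r" if "norm (x - p) \<le> r" for x
    proof -
      have "norm (x - p) < d"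
        using that \<open>r < d\<close> by linarith
      then have "norm (U x - U p - L (x - p)) \<le> e / 2 * norm (x - p)"
        by (rule small)
      also have "\<dots> \<le> e / 2 * r"
        using that e by (intro mult_left_mono) auto
      finally show ?thesis .
    qed
    have "U y - U z - L (y - z) = (U y - U p - L (y - p)) - (U z - U p - L (z - p))"
      using has_derivative_linear[OF UL] by (simp add: linear_diff algebra_simps)
    then have "norm (U y - U z - L (y - z))
        \<le> norm (U y - U p - L (y - p)) + norm (U z - U p - L (z - p))"
      by (simp only: norm_triangle_ineq4)
    also have "\<dots> \<le> e / 2 * r + e / 2 * r"
      using bound that by (intro add_mono) auto
    finally show ?thesis
      by simp
  qed
  with \<open>0 < d\<close> show ?thesis
    using that by blast
qed

lemma second_difference_asymptotic:
  fixes f :: "'a::real_normed_vector \<Rightarrow> 'b::real_inner"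
  assumes df: "\<And>x. f differentiable (at x)"
    and dU: "(\<lambda>x. frechet_derivative f (at x) u) differentiable (at p)" and e: "0 < e"
  shows "\<forall>\<^sub>F h in at_right 0. norm (second_difference f p u v h
    - h\<^sup>2 *\<^sub>R frechet_derivative (\<lambda>x. frechet_derivative f (at x) u) (at p) v) \<le> e * h\<^sup>2"
proof -
  define U where "U x = frechet_derivative f (at x) u" for x
  define L where "L = frechet_derivative U (at p)"
  have UL: "(U has_derivative L) (at p)"
    using dU frechet_derivative_works unfolding U_def L_def by blast
  define K where "K = norm u + norm v + 1"
  have K: "0 < K"
    unfolding K_def by (simp add: add_nonneg_pos)
  obtain d where d: "0 < d" and increment: "\<And>y z r. norm (y - p) \<le> r \<Longrightarrow> norm (z - p) \<le> r \<Longrightarrow>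
      r < d \<Longrightarrow> norm (U y - U z - L (y - z)) \<le> e / K * r"
    using has_derivative_increment_estimate[OF UL, of "e / K"] e K by auto
  have "norm (second_difference f p u v h - h\<^sup>2 *\<^sub>R L v) \<le> e * h\<^sup>2" if h: "h \<in> {0<..<d / K}" for h
  proof -
    from h have "0 < h" "h * K < d"
      using K by (auto simp: field_simps)
    then obtain s where s: "s \<in> {0<..<h}" and mvt:
      "norm (second_difference f p u v h - h\<^sup>2 *\<^sub>R L v)
        \<le> h * norm (U (p + s *\<^sub>R u + h *\<^sub>R v) - U (p + s *\<^sub>R u) - h *\<^sub>R L v)"
      using second_difference_mvt[OF df] unfolding U_def by blast
    have "norm (s *\<^sub>R u) \<le> h * norm u"
      using s by (simp add: mult_right_mono)
    moreover have "norm (s *\<^sub>R u + h *\<^sub>R v) \<le> h * (norm u + norm v)"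
      using norm_triangle_ineq[of "s *\<^sub>R u" "h *\<^sub>R v"] \<open>norm (s *\<^sub>R u) \<le> h * norm u\<close> \<open>0 < h\<close>
      by (simp add: algebra_simps)
    moreover have "h * norm u \<le> h * K" "h * (norm u + norm v) \<le> h * K"
      using \<open>0 < h\<close> unfolding K_def by simp_all
    ultimately have "norm (s *\<^sub>R u) \<le> h * K" "norm (s *\<^sub>R u + h *\<^sub>R v) \<le> h * K"
      by linarith+
    moreover have "L (h *\<^sub>R v) = h *\<^sub>R L v"
      using has_derivative_linear[OF UL] by (simp add: linear_scale)
    ultimately have "norm (U (p + s *\<^sub>R u + h *\<^sub>R v) - U (p + s *\<^sub>R u) - h *\<^sub>R L v) \<le> e / K * (h * K)"
      using increment[of "p + s *\<^sub>R u + h *\<^sub>R v" "h * K" "p + s *\<^sub>R u"] \<open>h * K < d\<close>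
      by (simp add: add.assoc)
    also have "\<dots> = e * h"
      using K by simp
    finally have "h * norm (U (p + s *\<^sub>R u + h *\<^sub>R v) - U (p + s *\<^sub>R u) - h *\<^sub>R L v) \<le> h * (e * h)"
      using \<open>0 < h\<close> by (simp add: mult_left_mono)
    with mvt show ?thesis
      by (simp add: power2_eq_square mult.commute mult.left_commute)
  qed
  then show ?thesis
    using eventually_at_right_real[of 0 "d / K"] d K unfolding L_def U_def
    by (auto elim: eventually_mono)
qed

theorem frechet_derivative_second_commute:
  fixes f :: "'a::real_normed_vector \<Rightarrow> 'b::real_inner"
  assumes df: "\<And>x. f differentiable (at x)"
    and dU: "(\<lambda>x. frechet_derivative f (at x) u) differentiable (at p)"
    and dV: "(\<lambda>x. frechet_derivative f (at x) v) differentiable (at p)"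
  shows "frechet_derivative (\<lambda>x. frechet_derivative f (at x) u) (at p) v
       = frechet_derivative (\<lambda>x. frechet_derivative f (at x) v) (at p) u"
    (is "?A = ?B")
proof -
  have "norm (?A - ?B) \<le> e" if e: "0 < e" for e
  proof -
    have "\<forall>\<^sub>F h in at_right 0. 0 < h \<and> norm (second_difference f p u v h - h\<^sup>2 *\<^sub>R ?A) \<le> e/2 * h\<^sup>2
        \<and> norm (second_difference f p u v h - h\<^sup>2 *\<^sub>R ?B) \<le> e/2 * h\<^sup>2"
      using eventually_conj[OF eventually_at_right_less eventually_conj[OF
          second_difference_asymptotic[OF df dU, of "e/2" v]
          second_difference_asymptotic[OF df dV, of "e/2" u]]] e
      by (simp add: second_difference_commute[of f p v])
    then obtain h where h: "0 < h" and
      "norm (second_difference f p u v h - h\<^sup>2 *\<^sub>R ?A) \<le> e/2 * h\<^sup>2"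
      "norm (second_difference f p u v h - h\<^sup>2 *\<^sub>R ?B) \<le> e/2 * h\<^sup>2"
      using eventually_happens[of _ "at_right (0::real)"] by auto
    then have "norm (h\<^sup>2 *\<^sub>R (?A - ?B)) \<le> e * h\<^sup>2"
      using norm_triangle_ineq4[of "second_difference f p u v h - h\<^sup>2 *\<^sub>R ?B"
          "second_difference f p u v h - h\<^sup>2 *\<^sub>R ?A"]
      by (simp add: algebra_simps)
    then show ?thesis
      using h by simp
  qed
  then have "norm (?A - ?B) \<le> 0"
    using field_le_epsilon[of "norm (?A - ?B)" 0] by simp
  then show ?thesis
    by simp
qed

definition dderiv :: "'a \<Rightarrow> ('a::real_normed_vector \<Rightarrow> 'b::real_normed_vector) \<Rightarrow> 'a \<Rightarrow> 'b" where
  "dderiv u f = (\<lambda>p. frechet_derivative f (at p) u)"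

lemma dderiv_const [simp]: "dderiv u (\<lambda>p. c) = (\<lambda>p. 0)"
  by (simp add: dderiv_def)

lemma dderiv_add:
  assumes "\<And>p. f differentiable (at p)" "\<And>p. g differentiable (at p)"
  shows "dderiv u (\<lambda>p. f p + g p) = (\<lambda>p. dderiv u f p + dderiv u g p)"
  unfolding dderiv_def
  by (intro ext frechet_derivative_at[symmetric, THEN fun_cong] has_derivative_add)
    (use assms frechet_derivative_works in blast)+

lemma dderiv_mult:
  fixes f g :: "'a::real_normed_vector \<Rightarrow> 'b::real_normed_algebra"
  assumes "\<And>p. f differentiable (at p)" "\<And>p. g differentiable (at p)"
  shows "dderiv u (\<lambda>p. f p * g p) = (\<lambda>p. dderiv u f p * g p + f p * dderiv u g p)"
proof -
  have "frechet_derivative (\<lambda>x. f x * g x) (at p)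
      = (\<lambda>h. f p * frechet_derivative g (at p) h + frechet_derivative f (at p) h * g p)" for p
    by (rule frechet_derivative_at[symmetric], rule has_derivative_mult)
      (use assms frechet_derivative_works in blast)+
  then show ?thesis
    unfolding dderiv_def by (simp add: add.commute)
qed

text \<open>
  \<^const>\<open>smooth_fun\<close> only asks for some family closed under directional derivatives, so
  closure under sums and products goes through the algebra generated by smooth functions.
\<close>

inductive_set smooth_algebra :: "fn set" where
  smooth: "smooth_fun f \<Longrightarrow> f \<in> smooth_algebra"
| const: "(\<lambda>p. c) \<in> smooth_algebra"
| add: "f \<in> smooth_algebra \<Longrightarrow> g \<in> smooth_algebra \<Longrightarrow> (\<lambda>p. f p + g p) \<in> smooth_algebra"
| mult: "f \<in> smooth_algebra \<Longrightarrow> g \<in> smooth_algebra \<Longrightarrow> (\<lambda>p. f p * g p) \<in> smooth_algebra"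

lemma smooth_fun_iff:
  "smooth_fun f \<longleftrightarrow> (\<exists>F. f \<in> F \<and> (\<forall>g\<in>F. \<forall>p. g differentiable (at p)) \<and> (\<forall>g\<in>F. \<forall>u. dderiv u g \<in> F))"
  unfolding smooth_fun_def dderiv_def ..

lemma smooth_differentiable: "smooth_fun f \<Longrightarrow> f differentiable (at p)"
  unfolding smooth_fun_iff by blast

lemma smooth_dderiv [simp]: "smooth_fun f \<Longrightarrow> smooth_fun (dderiv u f)"
  unfolding smooth_fun_iff by blast

lemma smooth_algebra_closed:
  "g \<in> smooth_algebra \<Longrightarrow> (\<forall>p. g differentiable (at p)) \<and> (\<forall>u. dderiv u g \<in> smooth_algebra)"
proof (induction rule: smooth_algebra.induct)
  case (smooth f)
  then show ?case
    using smooth_differentiable smooth_dderiv smooth_algebra.smooth by blast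
next
  case (const c)
  then show ?case
    by (simp add: smooth_algebra.const)
next
  case (add f g)
  then have df: "\<And>p. f differentiable (at p)" and dg: "\<And>p. g differentiable (at p)"
    by blast+
  show ?case
  proof (intro conjI allI)
    show "(\<lambda>p. f p + g p) differentiable (at p)" for p
      using df dg by (rule differentiable_add)
    show "dderiv u (\<lambda>p. f p + g p) \<in> smooth_algebra" for u
      unfolding dderiv_add[OF df dg] by (intro smooth_algebra.add) (use add.IH in blast)+
  qed
next
  case (mult f g)
  then have df: "\<And>p. f differentiable (at p)" and dg: "\<And>p. g differentiable (at p)"
    by blast+
  show ?case
  proof (intro conjI allI)
    show "(\<lambda>p. f p * g p) differentiable (at p)" for p
      using df dg by (rule differentiable_mult)
    show "dderiv u (\<lambda>p. f p * g p) \<in> smooth_algebra" for u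
      unfolding dderiv_mult[OF df dg]
      by (intro smooth_algebra.add smooth_algebra.mult) (use mult.hyps mult.IH in blast)+
  qed
qed

lemma smooth_algebra_smooth: "g \<in> smooth_algebra \<Longrightarrow> smooth_fun g"
  unfolding smooth_fun_iff using smooth_algebra_closed by blast

lemma smooth_add [simp]: "smooth_fun f \<Longrightarrow> smooth_fun g \<Longrightarrow> smooth_fun (\<lambda>p. f p + g p)"
  by (rule smooth_algebra_smooth) (intro smooth_algebra.add smooth_algebra.smooth)

lemma smooth_mult [simp]: "smooth_fun f \<Longrightarrow> smooth_fun g \<Longrightarrow> smooth_fun (\<lambda>p. f p * g p)"
  by (rule smooth_algebra_smooth) (intro smooth_algebra.mult smooth_algebra.smooth)

lemma smooth_cmult [simp]: "smooth_fun f \<Longrightarrow> smooth_fun (\<lambda>p. c * f p)"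
  by (rule smooth_algebra_smooth) (intro smooth_algebra.mult smooth_algebra.const smooth_algebra.smooth)

lemma smooth_sum [simp]: "(\<And>i. i \<in> I \<Longrightarrow> smooth_fun (F i)) \<Longrightarrow> smooth_fun (\<lambda>p. \<Sum>i\<in>I. F i p)"
  by (induction I rule: infinite_finite_induct)
    (simp_all add: smooth_algebra_smooth[OF smooth_algebra.const])

lemma dderiv_smooth_add:
  "smooth_fun f \<Longrightarrow> smooth_fun g \<Longrightarrow> dderiv u (\<lambda>p. f p + g p) = (\<lambda>p. dderiv u f p + dderiv u g p)"
  by (simp add: dderiv_add smooth_differentiable)

lemma dderiv_smooth_mult:
  "smooth_fun f \<Longrightarrow> smooth_fun g \<Longrightarrow> dderiv u (\<lambda>p. f p * g p) = (\<lambda>p. dderiv u f p * g p + f p * dderiv u g p)"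
  by (simp add: dderiv_mult smooth_differentiable)

lemma dderiv_smooth_cmult: "smooth_fun f \<Longrightarrow> dderiv u (\<lambda>p. c * f p) = (\<lambda>p. c * dderiv u f p)"
  using dderiv_mult[of "\<lambda>p. c" f u] smooth_differentiable by fastforce

lemma dderiv_smooth_sum:
  "(\<And>i. i \<in> I \<Longrightarrow> smooth_fun (F i)) \<Longrightarrow> dderiv u (\<lambda>p. \<Sum>i\<in>I. F i p) = (\<lambda>p. \<Sum>i\<in>I. dderiv u (F i) p)"
  by (induction I rule: infinite_finite_induct) (simp_all add: dderiv_smooth_add)

lemma dderiv_smooth_commute:
  assumes "smooth_fun f"
  shows "dderiv u (dderiv v f) = dderiv v (dderiv u f)"
proof
  fix p
  have "dderiv u f differentiable (at p)" "dderiv v f differentiable (at p)"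
    using assms by (simp_all add: smooth_differentiable)
  then show "dderiv u (dderiv v f) p = dderiv v (dderiv u f) p"
    unfolding dderiv_def
    by (intro frechet_derivative_second_commute[symmetric]) (simp_all add: assms smooth_differentiable)
qed

lemma dv1_eq_dderiv: "dv1 = dderiv (0, axis 1 1)"
  unfolding dv1_def dderiv_def ..

lemma dx1_eq_dderiv: "dx1 = dderiv (axis 1 1, 0)"
  unfolding dx1_def dderiv_def ..

definition first_order :: "complex \<Rightarrow> complex \<Rightarrow> fn \<Rightarrow> fn" where
  "first_order \<alpha> \<beta> f = (\<lambda>p. \<alpha> * dv1 f p + \<beta> * dx1 f p)"

lemma smooth_first_order [simp]: "smooth_fun f \<Longrightarrow> smooth_fun (first_order \<alpha> \<beta> f)"
  unfolding first_order_def dv1_eq_dderiv dx1_eq_dderiv by simp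

lemma first_order_add:
  "smooth_fun f \<Longrightarrow> smooth_fun g \<Longrightarrow>
    first_order \<alpha> \<beta> (\<lambda>p. f p + g p) = (\<lambda>p. first_order \<alpha> \<beta> f p + first_order \<alpha> \<beta> g p)"
  unfolding first_order_def dv1_eq_dderiv dx1_eq_dderiv by (simp add: dderiv_smooth_add algebra_simps)

lemma first_order_cmult:
  "smooth_fun f \<Longrightarrow> first_order \<alpha> \<beta> (\<lambda>p. c * f p) = (\<lambda>p. c * first_order \<alpha> \<beta> f p)"
  unfolding first_order_def dv1_eq_dderiv dx1_eq_dderiv by (simp add: dderiv_smooth_cmult algebra_simps)

lemma first_order_sum:
  "(\<And>i. i \<in> I \<Longrightarrow> smooth_fun (F i)) \<Longrightarrow>
    first_order \<alpha> \<beta> (\<lambda>p. \<Sum>i\<in>I. F i p) = (\<lambda>p. \<Sum>i\<in>I. first_order \<alpha> \<beta> (F i) p)"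
  unfolding first_order_def dv1_eq_dderiv dx1_eq_dderiv
  by (simp add: dderiv_smooth_sum sum_distrib_left sum.distrib)

lemma first_order_mult:
  "smooth_fun f \<Longrightarrow> smooth_fun g \<Longrightarrow>
    first_order \<alpha> \<beta> (\<lambda>p. f p * g p) = (\<lambda>p. first_order \<alpha> \<beta> f p * g p + f p * first_order \<alpha> \<beta> g p)"
  unfolding first_order_def dv1_eq_dderiv dx1_eq_dderiv by (simp add: dderiv_smooth_mult algebra_simps)

lemma first_order_commute:
  "smooth_fun f \<Longrightarrow> first_order \<alpha> \<beta> (first_order \<gamma> \<delta> f) = first_order \<gamma> \<delta> (first_order \<alpha> \<beta> f)"
  unfolding first_order_def dv1_eq_dderiv dx1_eq_dderiv
  by (simp add: dderiv_smooth_add dderiv_smooth_cmult dderiv_smooth_commute[of f "(0, axis 1 1)" "(axis 1 1, 0)"]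
      algebra_simps)

lemma first_order_square_mult:
  assumes "smooth_fun f" "smooth_fun g"
  shows "first_order \<alpha> \<beta> (first_order \<alpha> \<beta> (\<lambda>p. f p * g p))
    = (\<lambda>p. first_order \<alpha> \<beta> (first_order \<alpha> \<beta> f) p * g p
         + 2 * (first_order \<alpha> \<beta> f p * first_order \<alpha> \<beta> g p)
         + f p * first_order \<alpha> \<beta> (first_order \<alpha> \<beta> g) p)"
  using assms by (simp add: first_order_mult first_order_add algebra_simps)

lemma first_order_squares:
  assumes "smooth_fun f"
  shows "(\<lambda>p. first_order \<alpha> \<beta> (first_order \<alpha> \<beta> f) p + first_order \<gamma> \<delta> (first_order \<gamma> \<delta> f) p)
    = (\<lambda>p. (\<alpha>\<^sup>2 + \<gamma>\<^sup>2) * dv1 (dv1 f) p + 2 * (\<alpha> * \<beta> + \<gamma> * \<delta>) * dx1 (dv1 f) p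
         + (\<beta>\<^sup>2 + \<delta>\<^sup>2) * dx1 (dx1 f) p)"
  using assms unfolding first_order_def dv1_eq_dderiv dx1_eq_dderiv
  by (simp add: dderiv_smooth_add dderiv_smooth_cmult dderiv_smooth_commute[of f "(0, axis 1 1)" "(axis 1 1, 0)"]
      power2_eq_square algebra_simps)

lemma Lam_eq_first_order:
  "Lam \<tau> j = (if j = 1
     then first_order (of_real (\<tau> powr (1/2)) / (2 * \<i>)) (of_real (\<tau> powr (3/2)) / (2 * \<i>))
     else first_order (of_real (sqrt 3 * \<tau> powr (1/2)) / (2 * \<i>))
                      (of_real (sqrt 3 * \<tau> powr (3/2)) / (6 * \<i>)))"
  unfolding Lam_def first_order_def by (simp add: fun_eq_iff field_simps)

lemma Lam_first_order:
  obtains \<alpha> \<beta> where "Lam \<tau> j = first_order \<alpha> \<beta>"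
  using Lam_eq_first_order[of \<tau> j] by (cases "j = 1") simp_all

lemma smooth_Lam [simp]: "smooth_fun f \<Longrightarrow> smooth_fun (Lam \<tau> j f)"
  by (cases rule: Lam_first_order[of \<tau> j]) simp

lemma Lam_add:
  "smooth_fun f \<Longrightarrow> smooth_fun g \<Longrightarrow> Lam \<tau> j (\<lambda>p. f p + g p) = (\<lambda>p. Lam \<tau> j f p + Lam \<tau> j g p)"
  by (cases rule: Lam_first_order[of \<tau> j]) (simp add: first_order_add)

lemma Lam_cmult: "smooth_fun f \<Longrightarrow> Lam \<tau> j (\<lambda>p. c * f p) = (\<lambda>p. c * Lam \<tau> j f p)"
  by (cases rule: Lam_first_order[of \<tau> j]) (simp add: first_order_cmult)

lemma Lam_sum:
  "(\<And>i. i \<in> I \<Longrightarrow> smooth_fun (F i)) \<Longrightarrow>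
    Lam \<tau> j (\<lambda>p. \<Sum>i\<in>I. F i p) = (\<lambda>p. \<Sum>i\<in>I. Lam \<tau> j (F i) p)"
  by (cases rule: Lam_first_order[of \<tau> j]) (simp add: first_order_sum)

lemma Lam_commute: "smooth_fun f \<Longrightarrow> Lam \<tau> i (Lam \<tau> j f) = Lam \<tau> j (Lam \<tau> i f)"
  by (cases rule: Lam_first_order[of \<tau> i], cases rule: Lam_first_order[of \<tau> j])
    (simp add: first_order_commute)

lemma Lam_square_mult:
  "smooth_fun f \<Longrightarrow> smooth_fun g \<Longrightarrow> Lam \<tau> j (Lam \<tau> j (\<lambda>p. f p * g p))
    = (\<lambda>p. Lam \<tau> j (Lam \<tau> j f) p * g p + 2 * (Lam \<tau> j f p * Lam \<tau> j g p) + f p * Lam \<tau> j (Lam \<tau> j g) p)"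
  by (cases rule: Lam_first_order[of \<tau> j]) (simp add: first_order_square_mult)

definition words :: "nat \<Rightarrow> nat list set" where
  "words l = {w. length w = l \<and> set w \<subseteq> {1, 2}}"

lemma finite_words: "finite (words l)"
  unfolding words_def using finite_lists_length_eq[of "{1::nat, 2}" l] by (simp add: conj_commute)

lemma words_0: "words 0 = {[]}"
  unfolding words_def by auto

lemma sum_words_Suc: "(\<Sum>w\<in>words (Suc l). F w) = (\<Sum>w\<in>words l. F (1 # w) + F (2 # w))"
proof -
  have "words (Suc l) = (#) 1 ` words l \<union> (#) 2 ` words l"
    unfolding words_def by (auto simp: length_Suc_conv)
  moreover have "(#) 1 ` words l \<inter> (#) 2 ` words l = {}"
    by auto
  ultimately show ?thesis
    by (simp add: sum.union_disjoint finite_words sum.reindex sum.distrib)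
qed

lemma lam_word_Nil [simp]: "lam_word \<tau> [] f = f"
  unfolding lam_word_def by simp

lemma lam_word_Cons [simp]: "lam_word \<tau> (i # w) f = Lam \<tau> i (lam_word \<tau> w f)"
  unfolding lam_word_def by simp

lemma smooth_lam_word [simp]: "smooth_fun f \<Longrightarrow> smooth_fun (lam_word \<tau> w f)"
  by (induction w) simp_all

lemma lam_dot_words: "lam_dot \<tau> l f g = (\<lambda>p. \<Sum>w\<in>words l. lam_word \<tau> w f p * lam_word \<tau> w g p)"
  unfolding lam_dot_def words_def ..

lemma lam_dot_0: "lam_dot \<tau> 0 f g = (\<lambda>p. f p * g p)"
  unfolding lam_dot_words words_0 by simp

lemma smooth_lam_dot [simp]: "smooth_fun f \<Longrightarrow> smooth_fun g \<Longrightarrow> smooth_fun (lam_dot \<tau> l f g)"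
  unfolding lam_dot_words by simp

section \<open>The Leibniz coefficients\<close>

lemma Sum_any_triple_linear:
  fixes f g h :: "int \<Rightarrow> int \<Rightarrow> int \<Rightarrow> 'a::semiring_0"
  assumes "finite {(l, p, q). f l p q \<noteq> 0}" "finite {(l, p, q). g l p q \<noteq> 0}"
    "finite {(l, p, q). h l p q \<noteq> 0}"
  shows "(\<Sum>(l, p, q). f l p q + g l p q + c * h l p q)
    = (\<Sum>(l, p, q). f l p q) + (\<Sum>(l, p, q). g l p q) + c * (\<Sum>(l, p, q). h l p q)"
proof -
  have fin: "finite {(l, p, q). f l p q + g l p q \<noteq> 0}" "finite {(l, p, q). c * h l p q \<noteq> 0}"
    by (rule finite_subset[OF _ finite_UnI[OF assms(1,2)]], auto)
      (rule finite_subset[OF _ assms(3)], auto)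
  show ?thesis
    using Sum_any.distrib[of "\<lambda>(l, p, q). f l p q + g l p q" "\<lambda>(l, p, q). c * h l p q"]
      Sum_any.distrib[of "\<lambda>(l, p, q). f l p q" "\<lambda>(l, p, q). g l p q"]
      Sum_any_right_distrib[of "\<lambda>(l, p, q). h l p q" c] assms fin
    by (simp add: case_prod_unfold)
qed

lemma Sum_any_triple_translate:
  fixes F :: "int \<Rightarrow> int \<Rightarrow> int \<Rightarrow> 'a::comm_monoid_add"
  shows "(\<Sum>(l, p, q). F (l - a) (p - b) (q - c)) = (\<Sum>(l, p, q). F l p q)"
proof (rule sym, rule Sum_any.reindex_cong)
  show "bij (\<lambda>(l, p, q). (l - a, p - b, q - c))"
    by (rule o_bij[where g = "\<lambda>(l, p, q). (l + a, p + b, q + c)"]) auto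
qed auto

fun leibniz_coeff :: "nat \<Rightarrow> int \<Rightarrow> int \<Rightarrow> int \<Rightarrow> int \<Rightarrow> nat" where
  "leibniz_coeff 0 j l p q = of_bool (j = 0 \<and> l = 0 \<and> p = 0 \<and> q = 0)"
| "leibniz_coeff (Suc k) j l p q =
     leibniz_coeff k (j - 2) l (p - 1) q + leibniz_coeff k j l p (q - 1) + 2 * leibniz_coeff k (j - 1) (l - 1) p q"

lemma leibniz_coeff_nonzero:
  "leibniz_coeff k j l p q \<noteq> 0 \<Longrightarrow> 0 \<le> l \<and> 0 \<le> p \<and> 0 \<le> q \<and> j = l + 2 * p \<and> l + p + q = int k"
proof (induction k arbitrary: j l p q)
  case (Suc k)
  then consider "leibniz_coeff k (j - 2) l (p - 1) q \<noteq> 0" | "leibniz_coeff k j l p (q - 1) \<noteq> 0"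
    | "leibniz_coeff k (j - 1) (l - 1) p q \<noteq> 0"
    by fastforce
  then show ?case
    by cases (use Suc.IH in fastforce)+
qed simp

lemma finite_leibniz_coeff_support:
  "finite {(l, p, q). leibniz_coeff k (J l p q) (l - a) (p - b) (q - c) \<noteq> 0}"
proof (rule finite_subset)
  show "{(l, p, q). leibniz_coeff k (J l p q) (l - a) (p - b) (q - c) \<noteq> 0}
    \<subseteq> {a..a + int k} \<times> {b..b + int k} \<times> {c..c + int k}"
    using leibniz_coeff_nonzero by fastforce
qed simp

text \<open>By \<open>Mop_lam_dot\<close>, M acts on the family \<open>\<Lambda>\<^sup>l M\<^sup>p g \<cdot> \<Lambda>\<^sup>l M\<^sup>q h\<close> as this step.\<close>

definition leibniz_step :: "(int \<Rightarrow> int \<Rightarrow> int \<Rightarrow> 'a::comm_semiring_1) \<Rightarrow> int \<Rightarrow> int \<Rightarrow> int \<Rightarrow> 'a" where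
  "leibniz_step Y l p q = Y l (p + 1) q + Y l p (q + 1) + 2 * Y (l + 1) p q"

text \<open>
  Indices range over all of \<open>\<int>\<^sup>3\<close>: the shifts in the recursion are then bijections, so
  the recursion becomes a reindexing of \<^const>\<open>Sum_any\<close>.
\<close>

definition leibniz_expansion :: "nat \<Rightarrow> (int \<Rightarrow> int \<Rightarrow> int \<Rightarrow> 'a::comm_semiring_1) \<Rightarrow> 'a" where
  "leibniz_expansion k Y = (\<Sum>(l, p, q). of_nat (leibniz_coeff k (l + 2 * p) l p q) * Y l p q)"

lemma leibniz_expansion_0: "leibniz_expansion 0 Y = Y 0 0 0"
proof -
  have "leibniz_expansion 0 Y = (\<Sum>x\<in>{(0, 0, 0)}. case x of (l, p, q) \<Rightarrow>
      of_nat (leibniz_coeff 0 (l + 2 * p) l p q) * Y l p q)"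
    unfolding leibniz_expansion_def by (rule Sum_any.expand_superset) (auto simp: of_bool_def split: if_splits)
  then show ?thesis
    by simp
qed

lemma leibniz_expansion_Suc: "leibniz_expansion (Suc k) Y = leibniz_expansion k (leibniz_step Y)"
proof -
  let ?C = "\<lambda>l p q. of_nat (leibniz_coeff k (l + 2 * p) l p q)"
  have fin: "finite {(l, p, q). ?C (l - a) (p - b) (q - c) * Z l p q \<noteq> 0}"
    for a b c and Z :: "int \<Rightarrow> int \<Rightarrow> int \<Rightarrow> 'a"
    by (rule finite_subset[OF _ finite_leibniz_coeff_support[of k "\<lambda>l p q. l - a + 2 * (p - b)" a b c]])
      (auto simp: algebra_simps intro!: Nat.gr0I)
  have "leibniz_expansion (Suc k) Y = (\<Sum>(l, p, q). ?C l (p - 1) q * Y l p q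
      + ?C l p (q - 1) * Y l p q + 2 * (?C (l - 1) p q * Y l p q))"
    unfolding leibniz_expansion_def by (intro Sum_any.cong) (auto simp: algebra_simps)
  also have "\<dots> = (\<Sum>(l, p, q). ?C l (p - 1) q * Y l p q) + (\<Sum>(l, p, q). ?C l p (q - 1) * Y l p q)
      + 2 * (\<Sum>(l, p, q). ?C (l - 1) p q * Y l p q)"
    using fin[of 0 1 0 Y] fin[of 0 0 1 Y] fin[of 1 0 0 Y] by (simp add: Sum_any_triple_linear)
  also have "\<dots> = (\<Sum>(l, p, q). ?C l p q * Y l (p + 1) q) + (\<Sum>(l, p, q). ?C l p q * Y l p (q + 1))
      + 2 * (\<Sum>(l, p, q). ?C l p q * Y (l + 1) p q)"
    using Sum_any_triple_translate[of "\<lambda>l p q. ?C l p q * Y l (p + 1) q" 0 1 0]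
      Sum_any_triple_translate[of "\<lambda>l p q. ?C l p q * Y l p (q + 1)" 0 0 1]
      Sum_any_triple_translate[of "\<lambda>l p q. ?C l p q * Y (l + 1) p q" 1 0 0]
    by simp
  also have "\<dots> = (\<Sum>(l, p, q). ?C l p q * Y l (p + 1) q + ?C l p q * Y l p (q + 1)
      + 2 * (?C l p q * Y (l + 1) p q))"
    by (rule Sum_any_triple_linear[symmetric]) (use fin[of 0 0 0] in simp)+
  also have "\<dots> = leibniz_expansion k (leibniz_step Y)"
    unfolding leibniz_expansion_def leibniz_step_def by (intro Sum_any.cong) (auto simp: algebra_simps)
  finally show ?thesis .
qed

lemma leibniz_expansion_eq_funpow: "leibniz_expansion k Y = (leibniz_step ^^ k) Y 0 0 0"
  by (induction k arbitrary: Y) (simp_all add: leibniz_expansion_0 leibniz_expansion_Suc funpow_swap1)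

lemma leibniz_expansion_eq_sum_idx:
  "leibniz_expansion k Y = (\<Sum>j = 0..2 * k. \<Sum>(l, p, q)\<in>idx k j.
     of_nat (leibniz_coeff k (int j) (int l) (int p) (int q)) * Y (int l) (int p) (int q))"
proof -
  let ?T = "{(l, p, q). l + p + q = k} :: (nat \<times> nat \<times> nat) set"
  let ?G = "\<lambda>(l, p, q). of_nat (leibniz_coeff k (l + 2 * p) l p q) * Y l p q"
  let ?int = "\<lambda>(l, p, q). (int l, int p, int q)"
  have "finite ?T"
    by (rule finite_subset[of _ "{..k} \<times> {..k} \<times> {..k}"]) auto
  have "(l, p, q) \<in> ?int ` ?T" if "?G (l, p, q) \<noteq> 0" for l p q
  proof -
    from that have "leibniz_coeff k (l + 2 * p) l p q \<noteq> 0"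
      by (metis (no_types) mult_zero_left of_nat_0 prod.case)
    from leibniz_coeff_nonzero[OF this] show ?thesis
      by (auto intro!: image_eqI[of _ _ "(nat l, nat p, nat q)"])
  qed
  then have "{x. ?G x \<noteq> 0} \<subseteq> ?int ` ?T"
    by auto
  then have "leibniz_expansion k Y = sum ?G (?int ` ?T)"
    unfolding leibniz_expansion_def using \<open>finite ?T\<close> by (intro Sum_any.expand_superset) auto
  also have "\<dots> = sum (?G \<circ> ?int) ?T"
    by (rule sum.reindex) (auto simp: inj_on_def)
  also have "\<dots> = (\<Sum>j = 0..2 * k. sum (?G \<circ> ?int) {x \<in> ?T. (\<lambda>(l, p, q). l + 2 * p) x = j})"
    by (rule sum.group[symmetric]) (use \<open>finite ?T\<close> in auto)
  also have "\<dots> = (\<Sum>j = 0..2 * k. \<Sum>(l, p, q)\<in>idx k j.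
     of_nat (leibniz_coeff k (int j) (int l) (int p) (int q)) * Y (int l) (int p) (int q))"
  proof (rule sum.cong)
    fix j assume "j \<in> {0..2 * k}"
    then have "{x \<in> ?T. (\<lambda>(l, p, q). l + 2 * p) x = j} = idx k j"
      unfolding idx_def by auto
    then show "sum (?G \<circ> ?int) {x \<in> ?T. (\<lambda>(l, p, q). l + 2 * p) x = j} = (\<Sum>(l, p, q)\<in>idx k j.
      of_nat (leibniz_coeff k (int j) (int l) (int p) (int q)) * Y (int l) (int p) (int q))"
      by (auto simp: idx_def intro!: sum.cong)
  qed simp
  finally show ?thesis .
qed

definition choose_int :: "nat \<Rightarrow> int \<Rightarrow> nat" where
  "choose_int n m = (if m < 0 then 0 else n choose nat m)"

lemma choose_int_Suc: "choose_int (Suc n) m = choose_int n m + choose_int n (m - 1)"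
proof (cases "m \<le> 0")
  case True
  then show ?thesis
    unfolding choose_int_def by auto
next
  case False
  then have "m = int (Suc (nat (m - 1)))"
    by simp
  then obtain r where "m = int (Suc r)"
    by blast
  then have "nat m = Suc r" "nat (m - 1) = r" "\<not> m < 0" "\<not> m - 1 < 0"
    by simp_all
  then show ?thesis
    unfolding choose_int_def by simp
qed

lemma funpow_leibniz_step_indicator:
  "(leibniz_step ^^ k) (\<lambda>l p q. of_bool (l + 2 * p = j)) l p q = choose_int (2 * k) (j - l - 2 * p)"
proof (induction k arbitrary: l p q)
  case 0
  then show ?case
    unfolding choose_int_def by auto
next
  case (Suc k)
  have "choose_int (2 * Suc k) (j - l - 2 * p) = choose_int (2 * k) (j - l - 2 * (p + 1))
      + choose_int (2 * k) (j - l - 2 * p) + 2 * choose_int (2 * k) (j - (l + 1) - 2 * p)"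
    by (simp add: choose_int_Suc algebra_simps)
  then show ?case
    by (simp add: Suc.IH leibniz_step_def[of "(leibniz_step ^^ k) _"])
qed

lemma sum_idx_leibniz_coeff:
  assumes "j \<le> 2 * k"
  shows "(\<Sum>(l, p, q)\<in>idx k j. leibniz_coeff k (int j) (int l) (int p) (int q)) = (2 * k) choose j"
proof -
  let ?S = "\<lambda>i. \<Sum>(l, p, q)\<in>idx k i. leibniz_coeff k (int i) (int l) (int p) (int q)"
  have J: "{0..2 * k} \<inter> {i. i = j} = {j}"
    using assms by auto
  have "(2 * k) choose j = leibniz_expansion k (\<lambda>l p q. of_bool (l + 2 * p = int j))"
    by (simp add: leibniz_expansion_eq_funpow funpow_leibniz_step_indicator choose_int_def)
  also have "\<dots> = (\<Sum>i = 0..2 * k. ?S i * of_bool (i = j))"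
    unfolding leibniz_expansion_eq_sum_idx sum_distrib_right
    by (intro sum.cong refl) (auto simp: idx_def)
  also have "\<dots> = ?S j"
    by (simp only: sum_mult_of_bool_eq[OF finite_atLeastAtMost] J) simp
  finally show ?thesis ..
qed

section \<open>The operator M\<close>

context
  fixes \<tau> :: real
  assumes nonneg: "0 \<le> \<tau>"
begin

lemma Mop_eq_Lam_squares:
  assumes "smooth_fun f"
  shows "Mop \<tau> f = (\<lambda>p. Lam \<tau> 1 (Lam \<tau> 1 f) p + Lam \<tau> 2 (Lam \<tau> 2 f) p)"
proof -
  define a b s :: complex
    where "a = of_real (\<tau> powr (1/2))" and "b = of_real (\<tau> powr (3/2))" and "s = of_real (sqrt 3)"
  have powers: "a\<^sup>2 = of_real \<tau>" "a * b = of_real (\<tau>\<^sup>2)" "b\<^sup>2 = of_real (\<tau>^3)"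
    unfolding a_def b_def using nonneg
    by (simp_all flip: of_real_power of_real_mult powr_add add: power2_eq_square)
  have "s * s = 3"
    unfolding s_def by (simp flip: of_real_mult)
  then have "(a / (2 * \<i>))\<^sup>2 + (s * a / (2 * \<i>))\<^sup>2 = - a\<^sup>2"
    "2 * (a / (2 * \<i>) * (b / (2 * \<i>)) + s * a / (2 * \<i>) * (s * b / (6 * \<i>))) = - (a * b)"
    "(b / (2 * \<i>))\<^sup>2 + (s * b / (6 * \<i>))\<^sup>2 = - (b\<^sup>2 / 3)"
    by (simp_all add: power2_eq_square field_simps)
  then have coeffs: "(a / (2 * \<i>))\<^sup>2 + (s * a / (2 * \<i>))\<^sup>2 = - of_real \<tau>"
    "2 * (a / (2 * \<i>) * (b / (2 * \<i>)) + s * a / (2 * \<i>) * (s * b / (6 * \<i>))) = - of_real (\<tau>\<^sup>2)"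
    "(b / (2 * \<i>))\<^sup>2 + (s * b / (6 * \<i>))\<^sup>2 = - of_real (\<tau>^3 / 3)"
    unfolding powers by simp_all
  have Lam12: "Lam \<tau> 1 = first_order (a / (2 * \<i>)) (b / (2 * \<i>))"
    "Lam \<tau> 2 = first_order (s * a / (2 * \<i>)) (s * b / (6 * \<i>))"
    unfolding a_def b_def s_def by (simp_all add: Lam_eq_first_order)
  have "(\<lambda>p. Lam \<tau> 1 (Lam \<tau> 1 f) p + Lam \<tau> 2 (Lam \<tau> 2 f) p)
    = (\<lambda>p. ((a / (2 * \<i>))\<^sup>2 + (s * a / (2 * \<i>))\<^sup>2) * dv1 (dv1 f) p
         + 2 * (a / (2 * \<i>) * (b / (2 * \<i>)) + s * a / (2 * \<i>) * (s * b / (6 * \<i>))) * dx1 (dv1 f) p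
         + ((b / (2 * \<i>))\<^sup>2 + (s * b / (6 * \<i>))\<^sup>2) * dx1 (dx1 f) p)"
    unfolding Lam12 by (rule first_order_squares[OF assms])
  also have "\<dots> = Mop \<tau> f"
    unfolding coeffs Mop_def by simp
  finally show ?thesis ..
qed

lemma smooth_Mop [simp]: "smooth_fun f \<Longrightarrow> smooth_fun (Mop \<tau> f)"
  by (simp add: Mop_eq_Lam_squares)

lemma Mop_add:
  "smooth_fun f \<Longrightarrow> smooth_fun g \<Longrightarrow> Mop \<tau> (\<lambda>p. f p + g p) = (\<lambda>p. Mop \<tau> f p + Mop \<tau> g p)"
  by (simp add: Mop_eq_Lam_squares Lam_add algebra_simps)

lemma Mop_cmult: "smooth_fun f \<Longrightarrow> Mop \<tau> (\<lambda>p. c * f p) = (\<lambda>p. c * Mop \<tau> f p)"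
  by (simp add: Mop_eq_Lam_squares Lam_cmult algebra_simps)

lemma Mop_sum:
  "(\<And>i. i \<in> I \<Longrightarrow> smooth_fun (F i)) \<Longrightarrow>
    Mop \<tau> (\<lambda>p. \<Sum>i\<in>I. F i p) = (\<lambda>p. \<Sum>i\<in>I. Mop \<tau> (F i) p)"
  by (simp add: Mop_eq_Lam_squares Lam_sum sum.distrib)

lemma Mop_mult:
  "smooth_fun f \<Longrightarrow> smooth_fun g \<Longrightarrow> Mop \<tau> (\<lambda>p. f p * g p)
    = (\<lambda>p. Mop \<tau> f p * g p + f p * Mop \<tau> g p + 2 * (Lam \<tau> 1 f p * Lam \<tau> 1 g p + Lam \<tau> 2 f p * Lam \<tau> 2 g p))"
  by (simp add: Mop_eq_Lam_squares Lam_square_mult fun_eq_iff algebra_simps)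

lemma Mop_Lam_commute:
  assumes "smooth_fun f"
  shows "Mop \<tau> (Lam \<tau> j f) = Lam \<tau> j (Mop \<tau> f)"
proof -
  have comm: "Lam \<tau> i (Lam \<tau> i (Lam \<tau> j f)) = Lam \<tau> j (Lam \<tau> i (Lam \<tau> i f))" for i
    using assms Lam_commute[of f \<tau> i j] Lam_commute[of "Lam \<tau> i f" \<tau> i j] by simp
  have "Mop \<tau> (Lam \<tau> j f) = (\<lambda>p. Lam \<tau> j (Lam \<tau> 1 (Lam \<tau> 1 f)) p + Lam \<tau> j (Lam \<tau> 2 (Lam \<tau> 2 f)) p)"
    using assms by (simp only: Mop_eq_Lam_squares smooth_Lam comm)
  also have "\<dots> = Lam \<tau> j (Mop \<tau> f)"
    using assms by (simp add: Mop_eq_Lam_squares Lam_add)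
  finally show ?thesis .
qed

lemma Mop_lam_word: "smooth_fun f \<Longrightarrow> Mop \<tau> (lam_word \<tau> w f) = lam_word \<tau> w (Mop \<tau> f)"
  by (induction w) (simp_all add: Mop_Lam_commute nonneg)

lemma Mop_lam_dot:
  assumes "smooth_fun f" "smooth_fun g"
  shows "Mop \<tau> (lam_dot \<tau> l f g) = (\<lambda>p. lam_dot \<tau> l (Mop \<tau> f) g p + lam_dot \<tau> l f (Mop \<tau> g) p
      + 2 * lam_dot \<tau> (Suc l) f g p)"
proof -
  have "Mop \<tau> (lam_dot \<tau> l f g)
      = (\<lambda>p. \<Sum>w\<in>words l. Mop \<tau> (\<lambda>p. lam_word \<tau> w f p * lam_word \<tau> w g p) p)"
    unfolding lam_dot_words using assms by (simp add: Mop_sum nonneg)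
  also have "\<dots> = (\<lambda>p. \<Sum>w\<in>words l. lam_word \<tau> w (Mop \<tau> f) p * lam_word \<tau> w g p
      + lam_word \<tau> w f p * lam_word \<tau> w (Mop \<tau> g) p
      + 2 * (lam_word \<tau> (1 # w) f p * lam_word \<tau> (1 # w) g p
           + lam_word \<tau> (2 # w) f p * lam_word \<tau> (2 # w) g p))"
    using assms by (simp add: Mop_mult Mop_lam_word nonneg)
  also have "\<dots> = (\<lambda>p. lam_dot \<tau> l (Mop \<tau> f) g p + lam_dot \<tau> l f (Mop \<tau> g) p
      + 2 * lam_dot \<tau> (Suc l) f g p)"
    unfolding lam_dot_words sum_words_Suc by (simp only: sum.distrib sum_distrib_left[symmetric])
  finally show ?thesis .
qed

lemma smooth_funpow_Mop [simp]: "smooth_fun f \<Longrightarrow> smooth_fun ((Mop \<tau> ^^ k) f)"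
  by (induction k) (simp_all add: nonneg)

lemma funpow_Mop_add:
  "smooth_fun f \<Longrightarrow> smooth_fun g \<Longrightarrow>
    (Mop \<tau> ^^ k) (\<lambda>p. f p + g p) = (\<lambda>p. (Mop \<tau> ^^ k) f p + (Mop \<tau> ^^ k) g p)"
  by (induction k) (simp_all add: Mop_add nonneg)

lemma funpow_Mop_cmult: "smooth_fun f \<Longrightarrow> (Mop \<tau> ^^ k) (\<lambda>p. c * f p) = (\<lambda>p. c * (Mop \<tau> ^^ k) f p)"
  by (induction k) (simp_all add: Mop_cmult nonneg)

lemma funpow_Mop_lam_dot:
  fixes g h :: fn
  defines "Y \<equiv> \<lambda>l p q. lam_dot \<tau> (nat l) ((Mop \<tau> ^^ nat p) g) ((Mop \<tau> ^^ nat q) h)"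
  assumes g: "smooth_fun g" and h: "smooth_fun h"
  shows "0 \<le> l \<Longrightarrow> 0 \<le> p \<Longrightarrow> 0 \<le> q \<Longrightarrow>
    (Mop \<tau> ^^ k) (Y l p q) z = (leibniz_step ^^ k) (\<lambda>l p q. Y l p q z) l p q"
proof (induction k arbitrary: l p q)
  case (Suc k)
  have smooth_Y: "smooth_fun (Y l' p' q')" for l' p' q'
    unfolding Y_def using g h by simp
  have "Mop \<tau> (Y l p q) = (\<lambda>z. Y l (p + 1) q z + Y l p (q + 1) z + 2 * Y (l + 1) p q z)"
    using Suc.prems g h by (simp add: Y_def Mop_lam_dot nonneg nat_add_distrib)
  then have "(Mop \<tau> ^^ Suc k) (Y l p q) z
      = (Mop \<tau> ^^ k) (Y l (p + 1) q) z + (Mop \<tau> ^^ k) (Y l p (q + 1)) z + 2 * (Mop \<tau> ^^ k) (Y (l + 1) p q) z"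
    by (simp only: funpow_Suc_right comp_apply) (simp add: smooth_Y funpow_Mop_add funpow_Mop_cmult)
  also have "\<dots> = (leibniz_step ^^ Suc k) (\<lambda>l p q. Y l p q z) l p q"
    using Suc by (simp add: leibniz_step_def[of "(leibniz_step ^^ k) _"])
  finally show ?case .
qed simp

lemma funpow_Mop_mult:
  assumes "smooth_fun g" "smooth_fun h"
  shows "(Mop \<tau> ^^ k) (\<lambda>z. g z * h z) = (\<lambda>z. \<Sum>j = 0..2 * k. \<Sum>(l, p, q)\<in>idx k j.
    of_nat (leibniz_coeff k (int j) (int l) (int p) (int q)) *
    lam_dot \<tau> l ((Mop \<tau> ^^ p) g) ((Mop \<tau> ^^ q) h) z)"
proof
  fix z
  let ?Y = "\<lambda>l p q. lam_dot \<tau> (nat l) ((Mop \<tau> ^^ nat p) g) ((Mop \<tau> ^^ nat q) h)"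
  have "(Mop \<tau> ^^ k) (\<lambda>z. g z * h z) z = (Mop \<tau> ^^ k) (?Y 0 0 0) z"
    by (simp add: lam_dot_0)
  also have "\<dots> = (leibniz_step ^^ k) (\<lambda>l p q. ?Y l p q z) 0 0 0"
    by (rule funpow_Mop_lam_dot[OF assms]) simp_all
  also have "\<dots> = leibniz_expansion k (\<lambda>l p q. ?Y l p q z)"
    by (simp add: leibniz_expansion_eq_funpow)
  finally show "(Mop \<tau> ^^ k) (\<lambda>z. g z * h z) z = (\<Sum>j = 0..2 * k. \<Sum>(l, p, q)\<in>idx k j.
    of_nat (leibniz_coeff k (int j) (int l) (int p) (int q)) *
    lam_dot \<tau> l ((Mop \<tau> ^^ p) g) ((Mop \<tau> ^^ q) h) z)"
    by (simp add: leibniz_expansion_eq_sum_idx)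
qed

end

theorem lemma4p2:
  fixes t0 t :: real
  assumes "0 < t0" "t0 \<le> 1/2" "t0 \<le> t" "t \<le> 1"
  shows "\<exists>c :: nat \<Rightarrow> int \<Rightarrow> int \<Rightarrow> int \<Rightarrow> int \<Rightarrow> nat.
    c 0 0 0 0 0 = 1
    \<and> (\<forall>k j l p q. (j > 2 * int k \<or> j < 0 \<or> l < 0 \<or> p < 0 \<or> q < 0) \<longrightarrow> c k j l p q = 0)
    \<and> (\<forall>k j l p q. c (Suc k) j l p q =
          c k (j - 2) l (p - 1) q + c k j l p (q - 1) + 2 * c k (j - 1) (l - 1) p q)
    \<and> (\<forall>k g h. smooth_fun g \<and> periodic_x g \<and> smooth_fun h \<and> periodic_x h \<longrightarrow>
          (Mop (t - t0) ^^ k) (\<lambda>z. g z * h z) =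
          (\<lambda>z. \<Sum>j = 0..2 * k. \<Sum>(l, p, q)\<in>idx k j.
               of_nat (c k (int j) (int l) (int p) (int q)) *
               lam_dot (t - t0) l ((Mop (t - t0) ^^ p) g) ((Mop (t - t0) ^^ q) h) z))
    \<and> (\<forall>k j. j \<le> 2 * k \<longrightarrow>
          (\<Sum>(l, p, q)\<in>idx k j. c k (int j) (int l) (int p) (int q)) = (2 * k) choose j)"
proof (intro exI[of _ leibniz_coeff] conjI allI impI)
  fix k :: nat and j l p q :: int
  assume "2 * int k < j \<or> j < 0 \<or> l < 0 \<or> p < 0 \<or> q < 0"
  then show "leibniz_coeff k j l p q = 0"
    using leibniz_coeff_nonzero[of k j l p q] by linarith
next
  fix k g h
  assume "smooth_fun g \<and> periodic_x g \<and> smooth_fun h \<and> periodic_x h"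
  then show "(Mop (t - t0) ^^ k) (\<lambda>z. g z * h z) =
    (\<lambda>z. \<Sum>j = 0..2 * k. \<Sum>(l, p, q)\<in>idx k j.
      of_nat (leibniz_coeff k (int j) (int l) (int p) (int q)) *
      lam_dot (t - t0) l ((Mop (t - t0) ^^ p) g) ((Mop (t - t0) ^^ q) h) z)"
    using assms by (intro funpow_Mop_mult) auto
qed (simp_all add: sum_idx_leibniz_coeff)

end
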